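(* Let $R_e\approx1.4877$ be the unique positive root of $\frac{10}{7(R+1)}-\frac{R^2\sqrt{R}}{R^2+R+1}=0$, and let $\tau_k>0$ be time steps with ratios $r_k=\tau_k/\tau_{k-1}\in(0,R_e)$ for all $k\ge2$. Then for every $n\ge3$ and every nonzero vector $(\xi_3,\dots,\xi_n)$ of reals, $$2\sum_{k=3}^n\xi_k\sum_{j=3}^k\tau_k\vartheta^{(k)}_{k-j}\xi_j>0 .$$
   Context: For $x,y\ge0$: $d_0(x,y)=\frac{1+2x}{1+x}+\frac{xy}{1+y+xy}$, $d_1(x,y)=-\frac{x}{1+x}-\frac{xy}{1+y+xy}-\frac{xy^2}{1+y+xy}\frac{1+x}{1+y}$, $d_2(x,y)=\frac{xy^2}{1+y+xy}\frac{1+x}{1+y}$. BDF3 kernels: $d^{(n)}_j=d_j(r_n,r_{n-1})$ for $j=0,1,2$, $d^{(n)}_j=0$ for $j\ge3$. The discrete orthogonal convolution (DOC) kernels are defined recursively for each fixed $n\ge3$ by $\vartheta^{(n)}_0=1/d^{(n)}_0$ and $\vartheta^{(n)}_{n-j}=-\frac{1}{d^{(j)}_0}\sum_{i=j+1}^n\vartheta^{(n)}_{n-i}d^{(i)}_{i-j}$ for $3\le j\le n-1$. *)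

theory Defs
  imports Complex_Main
begin

definition Re_root :: real where
  "Re_root = (THE R. R > 0 \<and> 10 / (7 * (R + 1)) - R^2 * sqrt R / (R^2 + R + 1) = 0)"

definition d0 :: "real \<Rightarrow> real \<Rightarrow> real" where
  "d0 x y = (1 + 2*x) / (1 + x) + x*y / (1 + y + x*y)"

definition d1 :: "real \<Rightarrow> real \<Rightarrow> real" where
  "d1 x y = - x / (1 + x) - x*y / (1 + y + x*y) - x*y^2 / (1 + y + x*y) * ((1 + x) / (1 + y))"

definition d2 :: "real \<Rightarrow> real \<Rightarrow> real" where
  "d2 x y = x*y^2 / (1 + y + x*y) * ((1 + x) / (1 + y))"

definition ratio :: "(nat \<Rightarrow> real) \<Rightarrow> nat \<Rightarrow> real" where
  "ratio tau k = tau k / tau (k - 1)"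

definition bdf3 :: "(nat \<Rightarrow> real) \<Rightarrow> nat \<Rightarrow> nat \<Rightarrow> real" where
  "bdf3 tau n j =
     (if j = 0 then d0 (ratio tau n) (ratio tau (n - 1))
      else if j = 1 then d1 (ratio tau n) (ratio tau (n - 1))
      else if j = 2 then d2 (ratio tau n) (ratio tau (n - 1))
      else 0)"

text \<open>DOC kernels: doc tau n m = vartheta^(n)_m. With m = n - j the recursion
  vartheta^(n)_(n-j) = -1/d^(j)_0 * sum_(i=j+1..n) vartheta^(n)_(n-i) d^(i)_(i-j)
  becomes, with l = n - i, the sum over l < m below.\<close>
fun doc :: "(nat \<Rightarrow> real) \<Rightarrow> nat \<Rightarrow> nat \<Rightarrow> real" where
  "doc tau n m =
     (if m = 0 then 1 / bdf3 tau n 0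
      else - (1 / bdf3 tau (n - m) 0) *
             (\<Sum>l\<in>{..<m}. doc tau n l * bdf3 tau (n - l) (m - l)))"

end

theory Submission
  imports Defs
begin

text \<open>
  Let B be the lower-triangular matrix of BDF3 kernels, B(k,i) = d^(k)_(k-i). The recursion
  defining the DOC kernels says that the row (\<vartheta>^(n)_(n-j))_j is row n of B^-1, so with
  w = B^-1 \<xi> the quadratic form becomes 2 \<Sum>_k \<tau>_k w_k (d0 w_k + d1 w_(k-1) + d2 w_(k-2)).
  For step ratios below 3/2 each summand dominates G_k - G_(k-1) + \<tau>_k w_k^2 / 100 for the
  nonnegative energy G_k = \<tau>_k (37/40 w_k^2 - 59/100 w_k w_(k-1)) + 7/20 \<tau>_(k-1) w_(k-1)^2,
  and the sum telescopes to at least \<Sum>_k \<tau>_k w_k^2 / 100 > 0. After clearing denominators,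
  the local inequality is the positive semidefiniteness of a ternary quadratic form whose leading
  principal minors are polynomials in the two step ratios r, s; their Bernstein expansions on
  [0, 3/2]^2 have positive coefficients. Finally R_e < 3/2, because the function defining R_e
  is decreasing and already negative at 3/2.
\<close>

definition Re_root_fun :: "real \<Rightarrow> real" where
  "Re_root_fun R = 10 / (7 * (R + 1)) - R^2 * sqrt R / (R^2 + R + 1)"

lemma Re_root_fun_strict_antimono:
  assumes "0 < R1" "R1 < R2"
  shows "Re_root_fun R2 < Re_root_fun R1"
proof -
  have "R1^2 * (R2^2 + R2 + 1) \<le> R2^2 * (R1^2 + R1 + 1)"
  proof -
    have "R1^2 * R2 \<le> R1 * R2^2" "R1^2 \<le> R2^2"
      using assms by (simp_all add: power2_eq_square mult_left_mono mult_right_mono mult_mono)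
    then show ?thesis by (simp add: algebra_simps power2_eq_square)
  qed
  then have "R1^2 / (R1^2 + R1 + 1) \<le> R2^2 / (R2^2 + R2 + 1)"
    using assms by (simp add: divide_simps add_pos_pos)
  then have "R1^2 / (R1^2 + R1 + 1) * sqrt R1 \<le> R2^2 / (R2^2 + R2 + 1) * sqrt R2"
    using assms by (intro mult_mono) auto
  moreover have "10 / (7 * (R2 + 1)) < 10 / (7 * (R1 + 1))"
    using assms by (simp add: divide_simps)
  ultimately show ?thesis unfolding Re_root_fun_def by simp
qed

lemma Re_root_fun_neg:
  assumes "3/2 \<le> R"
  shows "Re_root_fun R < 0"
proof -
  have "9 * (R^2 + R + 1) \<le> 19 * R^2"
    using assms mult_nonneg_nonneg[of "R - 3/2" "10 * R + 6"] by (simp add: algebra_simps power2_eq_square)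
  then have "9/19 \<le> R^2 / (R^2 + R + 1)"
    using assms by (simp add: divide_simps add_pos_pos)
  moreover have "76/63 < sqrt R"
    using real_less_rsqrt[of "76/63" "3/2"] real_sqrt_le_mono[OF assms]
    by (simp add: power2_eq_square del: real_sqrt_le_iff)
  ultimately have "(9/19) * (76/63) < R^2 / (R^2 + R + 1) * sqrt R"
    by (intro mult_le_less_imp_less) auto
  then have "4/7 < R^2 * sqrt R / (R^2 + R + 1)"
    by simp
  moreover have "10 / (7 * (R + 1)) \<le> 4/7"
    using assms by (simp add: divide_simps)
  ultimately show ?thesis unfolding Re_root_fun_def by linarith
qed

lemma Re_root_is_root: "0 < Re_root \<and> Re_root_fun Re_root = 0"
proof -
  have "continuous_on {1..3/2} Re_root_fun"
    unfolding Re_root_fun_def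
    by (intro continuous_intros) (auto, smt (verit) zero_le_power2)
  moreover have "0 \<le> Re_root_fun 1"
    unfolding Re_root_fun_def by simp
  ultimately obtain R0 where R0: "1 \<le> R0" "Re_root_fun R0 = 0"
    using IVT2'[of Re_root_fun "3/2" 0 1] Re_root_fun_neg[of "3/2"] by force
  have "\<exists>!R. 0 < R \<and> Re_root_fun R = 0"
  proof (rule ex1I[of _ R0])
    show "0 < R \<and> Re_root_fun R = 0 \<Longrightarrow> R = R0" for R
      using Re_root_fun_strict_antimono[of R R0] Re_root_fun_strict_antimono[of R0 R] R0
      by (cases R R0 rule: linorder_cases) auto
  qed (use R0 in simp)
  then show ?thesis
    unfolding Re_root_def Re_root_fun_def[abs_def] by (rule theI')
qed

lemma Re_root_less: "Re_root < 3/2"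
  using Re_root_is_root Re_root_fun_neg[of Re_root] by linarith

declare doc.simps[simp del]

fun bdf3_solve :: "(nat \<Rightarrow> real) \<Rightarrow> (nat \<Rightarrow> real) \<Rightarrow> nat \<Rightarrow> real" where
  "bdf3_solve tau xi k = (if k < 3 then 0 else
     (xi k - bdf3 tau k 1 * bdf3_solve tau xi (k - 1) - bdf3 tau k 2 * bdf3_solve tau xi (k - 2))
       / bdf3 tau k 0)"

declare bdf3_solve.simps[simp del]

lemma bdf3_solve_less_3: "k < 3 \<Longrightarrow> bdf3_solve tau xi k = 0"
  by (simp add: bdf3_solve.simps)

lemma bdf3_solve_recurrence:
  assumes "3 \<le> k" "bdf3 tau k 0 \<noteq> 0"
  shows "xi k = bdf3 tau k 0 * bdf3_solve tau xi k + bdf3 tau k 1 * bdf3_solve tau xi (k - 1)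
                + bdf3 tau k 2 * bdf3_solve tau xi (k - 2)"
  using assms by (simp add: bdf3_solve.simps[of tau xi k] field_simps)

lemma bdf3_conv_eq:
  assumes "3 \<le> k" and w: "\<And>i. i < 3 \<Longrightarrow> w i = 0"
  shows "(\<Sum>i=3..k. bdf3 tau k (k - i) * w i)
           = bdf3 tau k 0 * w k + bdf3 tau k 1 * w (k - 1) + bdf3 tau k 2 * w (k - 2)"
proof -
  have "(\<Sum>i=3..k. bdf3 tau k (k - i) * w i) = (\<Sum>i=0..k. bdf3 tau k (k - i) * w i)"
    by (rule sum.mono_neutral_left) (auto simp: w)
  also have "\<dots> = (\<Sum>j=0..k. bdf3 tau k j * w (k - j))"
    by (rule sum.reindex_bij_witness[where i="\<lambda>j. k - j" and j="\<lambda>i. k - i"]) auto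
  also have "\<dots> = (\<Sum>j<3. bdf3 tau k j * w (k - j))"
    using assms(1) by (intro sum.mono_neutral_right) (auto simp: bdf3_def)
  also have "\<dots> = bdf3 tau k 0 * w k + bdf3 tau k 1 * w (k - 1) + bdf3 tau k 2 * w (k - 2)"
    by (simp add: numeral_3_eq_3 numeral_2_eq_2)
  finally show ?thesis .
qed

lemma bdf3_conv_bdf3_solve:
  assumes "3 \<le> k" "bdf3 tau k 0 \<noteq> 0"
  shows "(\<Sum>i=3..k. bdf3 tau k (k - i) * bdf3_solve tau xi i) = xi k"
  using bdf3_conv_eq[OF assms(1)] bdf3_solve_recurrence[OF assms] bdf3_solve_less_3 by simp

lemma doc_orthogonal:
  assumes d0: "\<And>k. 3 \<le> k \<Longrightarrow> bdf3 tau k 0 \<noteq> 0" and "3 \<le> i" "i \<le> n"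
  shows "(\<Sum>j=i..n. doc tau n (n - j) * bdf3 tau j (j - i)) = (if i = n then 1 else 0)"
proof (cases "i = n")
  case True
  then show ?thesis using d0 assms by (simp add: doc.simps[of tau n 0])
next
  case False
  then have "i < n" using assms by simp
  have "(\<Sum>j=Suc i..n. doc tau n (n - j) * bdf3 tau j (j - i))
      = (\<Sum>l<n - i. doc tau n l * bdf3 tau (n - l) (n - i - l))"
    by (rule sum.reindex_bij_witness[where i="\<lambda>l. n - l" and j="\<lambda>j. n - j"]) auto
  also have "\<dots> = - doc tau n (n - i) * bdf3 tau i 0"
    using \<open>i < n\<close> d0[OF \<open>3 \<le> i\<close>] by (simp add: doc.simps[of tau n "n - i"])
  finally show ?thesis
    using \<open>i < n\<close> by (simp add: Icc_eq_insert_lb_nat)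
qed

lemma doc_conv_eq_bdf3_solve:
  assumes d0: "\<And>k. 3 \<le> k \<Longrightarrow> bdf3 tau k 0 \<noteq> 0" and "3 \<le> n"
  shows "(\<Sum>j=3..n. doc tau n (n - j) * xi j) = bdf3_solve tau xi n"
proof -
  let ?w = "bdf3_solve tau xi"
  have "(\<Sum>j=3..n. doc tau n (n - j) * xi j)
      = (\<Sum>j=3..n. doc tau n (n - j) * (\<Sum>i=3..j. bdf3 tau j (j - i) * ?w i))"
    by (intro sum.cong) (simp_all add: bdf3_conv_bdf3_solve d0)
  also have "\<dots> = (\<Sum>j=3..n. \<Sum>i=3..j. doc tau n (n - j) * bdf3 tau j (j - i) * ?w i)"
    by (simp add: sum_distrib_left mult.assoc)
  also have "\<dots> = (\<Sum>j\<in>{3..n}. \<Sum>i\<in>{i\<in>{3..n}. i \<le> j}. doc tau n (n - j) * bdf3 tau j (j - i) * ?w i)"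
    by (intro sum.cong) auto
  also have "\<dots> = (\<Sum>i\<in>{3..n}. \<Sum>j\<in>{j\<in>{3..n}. i \<le> j}. doc tau n (n - j) * bdf3 tau j (j - i) * ?w i)"
    by (rule sum.swap_restrict) auto
  also have "\<dots> = (\<Sum>i=3..n. \<Sum>j=i..n. doc tau n (n - j) * bdf3 tau j (j - i) * ?w i)"
    by (intro sum.cong) auto
  also have "\<dots> = (\<Sum>i=3..n. if i = n then ?w i else 0)"
    by (intro sum.cong) (simp_all add: doc_orthogonal d0 flip: sum_distrib_right)
  also have "\<dots> = ?w n"
    using assms(2) by simp
  finally show ?thesis .
qed

definition bdf3_energy :: "real \<Rightarrow> real \<Rightarrow> real \<Rightarrow> real \<Rightarrow> real" where
  "bdf3_energy t0 t1 x y = t0 * (37/40 * x^2 - 59/100 * x * y) + 7/20 * t1 * y^2"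

lemma binary_form_nonneg:
  fixes A B D x y :: real
  assumes "0 < A" "B^2 \<le> 4 * A * D"
  shows "0 \<le> A * x^2 + B * x * y + D * y^2"
proof -
  have "0 \<le> (2 * A * x + B * y)^2 + (4 * A * D - B^2) * y^2"
    using assms by simp
  also have "\<dots> = 4 * A * (A * x^2 + B * x * y + D * y^2)"
    by algebra
  finally show ?thesis
    using assms by (simp add: zero_le_mult_iff)
qed

lemma ternary_form_nonneg:
  fixes A B C D E F x y z :: real
  assumes "0 < A" "0 < 4 * A * D - B^2"
    and "0 \<le> 4 * A * D * F + B * C * E - A * E^2 - B^2 * F - C^2 * D"
  shows "0 \<le> A * x^2 + B * x * y + C * x * z + D * y^2 + E * y * z + F * z^2"
proof -
  define K where "K = 4 * A * D - B^2"
  define \<Delta> where "\<Delta> = 4 * A * D * F + B * C * E - A * E^2 - B^2 * F - C^2 * D"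
  have "0 \<le> K * (2 * A * x + B * y + C * z)^2 + (K * y + (2 * A * E - B * C) * z)^2 + 4 * A * \<Delta> * z^2"
    using assms unfolding K_def \<Delta>_def by (intro add_nonneg_nonneg mult_nonneg_nonneg) auto
  also have "\<dots> = 4 * A * K * (A * x^2 + B * x * y + C * x * z + D * y^2 + E * y * z + F * z^2)"
    unfolding K_def \<Delta>_def by algebra
  finally show ?thesis
    using mult_pos_pos[OF assms(1,2)] unfolding K_def by (simp add: zero_le_mult_iff)
qed

lemma bdf3_energy_nonneg:
  assumes "0 < t0" "t0 \<le> 3 * t1"
  shows "0 \<le> bdf3_energy t0 t1 x y"
  using binary_form_nonneg[of "37/40 * t0" "- 59/100 * t0" "7/20 * t1" x y] assms
  unfolding bdf3_energy_def by (simp add: power2_eq_square algebra_simps)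

definition bdf3_den :: "real \<Rightarrow> real \<Rightarrow> real" where
  "bdf3_den r s = (1 + r) * (1 + s) * (1 + s + r * s)"

definition d0_num :: "real \<Rightarrow> real \<Rightarrow> real" where
  "d0_num r s = (1 + 2 * r) * (1 + s) * (1 + s + r * s) + r * s * (1 + r) * (1 + s)"

definition d2_num :: "real \<Rightarrow> real \<Rightarrow> real" where
  "d2_num r s = r * s^2 * (1 + r)^2"

(* The consistency d0 + d1 + d2 = 1 of the BDF3 kernels fixes the numerator of d1. *)
definition d1_num :: "real \<Rightarrow> real \<Rightarrow> real" where
  "d1_num r s = bdf3_den r s - d0_num r s - d2_num r s"

lemma bdf3_den_pos: "0 < r \<Longrightarrow> 0 < s \<Longrightarrow> 0 < bdf3_den r s"
  unfolding bdf3_den_def by (simp add: add_pos_pos)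

lemma d_times_bdf3_den:
  fixes r s :: real
  assumes "0 < r" "0 < s"
  shows "d0 r s * bdf3_den r s = d0_num r s"
    and "d1 r s * bdf3_den r s = d1_num r s"
    and "d2 r s * bdf3_den r s = d2_num r s"
proof -
  define u v q where "u = 1 + r" and "v = 1 + s" and "q = 1 + s + r * s"
  have nz: "u \<noteq> 0" "v \<noteq> 0" "q \<noteq> 0"
    using assms by (auto simp: u_def v_def q_def add_pos_pos order.strict_implies_not_eq[symmetric])
  have d: "d0 r s = (1 + 2 * r) / u + r * s / q"
    "d1 r s = - r / u - r * s / q - r * s^2 / q * (u / v)"
    "d2 r s = r * s^2 / q * (u / v)"
    unfolding d0_def d1_def d2_def u_def v_def q_def by (simp_all add: add.assoc)
  have "d0 r s * (u * v * q) = (1 + 2 * r) * v * q + r * s * u * v"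
    and "d1 r s * (u * v * q) = - r * v * q - r * s * u * v - r * s^2 * u^2"
    and "d2 r s * (u * v * q) = r * s^2 * u^2"
    unfolding d using nz by (simp_all add: field_simps power2_eq_square)
  then show "d0 r s * bdf3_den r s = d0_num r s"
    and "d1 r s * bdf3_den r s = d1_num r s"
    and "d2 r s * bdf3_den r s = d2_num r s"
    unfolding bdf3_den_def d0_num_def d1_num_def d2_num_def u_def v_def q_def
    by (simp_all add: algebra_simps)
qed

(* With t0 = r s t2 and t1 = s t2, the step inequality times bdf3_den r s / t2 is a ternary
   quadratic form in (x, y, z). form_xx and form_xy are its xx and xy coefficients divided by r s
   (187/200 = 37/40 + 1/100 collects the energy and the margin); minor2 and minor3 are its 2x2
   and 3x3 leading principal minors times 4 / (r s^2) and 4 / (r s^2 bdf3_den r s). *)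
definition form_xx :: "real \<Rightarrow> real \<Rightarrow> real" where
  "form_xx r s = d0_num r s - 187/200 * bdf3_den r s"

definition form_xy :: "real \<Rightarrow> real \<Rightarrow> real" where
  "form_xy r s = d1_num r s + 59/100 * bdf3_den r s"

definition minor2 :: "real \<Rightarrow> real \<Rightarrow> real" where
  "minor2 r s = 23/10 * form_xx r s * bdf3_den r s - r * form_xy r s ^ 2"

definition minor3 :: "real \<Rightarrow> real \<Rightarrow> real" where
  "minor3 r s = (161/200 - 3481/10000 * s) * form_xx r s * bdf3_den r s
     - 59/100 * r * s * form_xy r s * d2_num r s - 7/20 * r * form_xy r s ^ 2
     - 23/40 * r * s * d2_num r s ^ 2"

(* Bernstein expansions on [0, 3/2]^2: every coefficient is positive. *)
lemma form_xx_bernstein: "3^4 * form_xx r s =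
       (13/200)*r^0*(3-2*r)^2*s^0*(3-2*s)^2 + (13/20)*r^0*(3-2*r)^2*s^1*(3-2*s)^1
     + (13/8)*r^0*(3-2*r)^2*s^2*(3-2*s)^0 + (691/200)*r^1*(3-2*r)^1*s^0*(3-2*s)^2
     + (8827/200)*r^1*(3-2*r)^1*s^1*(3-2*s)^1 + (1343/10)*r^1*(3-2*r)^1*s^2*(3-2*s)^0
     + (133/20)*r^2*(3-2*r)^0*s^0*(3-2*s)^2 + (5657/40)*r^2*(3-2*r)^0*s^1*(3-2*s)^1
     + (4327/8)*r^2*(3-2*r)^0*s^2*(3-2*s)^0"
  unfolding form_xx_def d0_num_def bdf3_den_def by algebra

lemma minor2_bernstein: "3^11 * minor2 r s =
       (299/2000)*r^0*(3-2*r)^7*s^0*(3-2*s)^4 + (299/100)*r^0*(3-2*r)^7*s^1*(3-2*s)^3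
     + (897/40)*r^0*(3-2*r)^7*s^2*(3-2*s)^2 + (299/4)*r^0*(3-2*r)^7*s^3*(3-2*s)^1
     + (1495/16)*r^0*(3-2*r)^7*s^4*(3-2*s)^0 + (88457/10000)*r^1*(3-2*r)^6*s^0*(3-2*s)^4
     + (40061/200)*r^1*(3-2*r)^6*s^1*(3-2*s)^3 + (41943/25)*r^1*(3-2*r)^6*s^2*(3-2*s)^2
     + (247087/40)*r^1*(3-2*r)^6*s^3*(3-2*s)^1 + (135239/16)*r^1*(3-2*r)^6*s^4*(3-2*s)^0
     + (1199901/10000)*r^2*(3-2*r)^5*s^0*(3-2*s)^4 + (14790513/5000)*r^2*(3-2*r)^5*s^1*(3-2*s)^3
     + (53334027/2000)*r^2*(3-2*r)^5*s^2*(3-2*s)^2 + (10480749/100)*r^2*(3-2*r)^5*s^3*(3-2*s)^1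
     + (1217049/8)*r^2*(3-2*r)^5*s^4*(3-2*s)^0 + (7064803/10000)*r^3*(3-2*r)^4*s^0*(3-2*s)^4
     + (94999033/5000)*r^3*(3-2*r)^4*s^1*(3-2*s)^3 + (1840476777/10000)*r^3*(3-2*r)^4*s^2*(3-2*s)^2
     + (192033413/250)*r^3*(3-2*r)^4*s^3*(3-2*s)^1 + (234142991/200)*r^3*(3-2*r)^4*s^4*(3-2*s)^0
     + (1364894/625)*r^4*(3-2*r)^3*s^0*(3-2*s)^4 + (318838961/5000)*r^4*(3-2*r)^3*s^1*(3-2*s)^3
     + (6596479083/10000)*r^4*(3-2*r)^3*s^2*(3-2*s)^2 + (361409201/125)*r^4*(3-2*r)^3*s^3*(3-2*s)^1
     + (1811004143/400)*r^4*(3-2*r)^3*s^4*(3-2*s)^0 + (4655199/1250)*r^5*(3-2*r)^2*s^0*(3-2*s)^4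
     + (292989207/2500)*r^5*(3-2*r)^2*s^1*(3-2*s)^3 + (12803797503/10000)*r^5*(3-2*r)^2*s^2*(3-2*s)^2
     + (5760945993/1000)*r^5*(3-2*r)^2*s^3*(3-2*s)^1 + (3515618823/400)*r^5*(3-2*r)^2*s^4*(3-2*s)^0
     + (416279/125)*r^6*(3-2*r)^1*s^0*(3-2*s)^4 + (28008467/250)*r^6*(3-2*r)^1*s^1*(3-2*s)^3
     + (318496137/250)*r^6*(3-2*r)^1*s^2*(3-2*s)^2 + (141030047/25)*r^6*(3-2*r)^1*s^3*(3-2*s)^1
     + (35928671/5)*r^6*(3-2*r)^1*s^4*(3-2*s)^0 + (30587/25)*r^7*(3-2*r)^0*s^0*(3-2*s)^4
     + (1091323/25)*r^7*(3-2*r)^0*s^1*(3-2*s)^3 + (50771127/100)*r^7*(3-2*r)^0*s^2*(3-2*s)^2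
     + (20467387/10)*r^7*(3-2*r)^0*s^3*(3-2*s)^1 + (3463907/4)*r^7*(3-2*r)^0*s^4*(3-2*s)^0"
  unfolding minor2_def form_xx_def form_xy_def d1_num_def d0_num_def d2_num_def bdf3_den_def
  by algebra

lemma minor3_bernstein: "3^12 * minor3 r s =
       (2093/40000)*r^0*(3-2*r)^7*s^0*(3-2*s)^5 + (2166541/2000000)*r^0*(3-2*r)^7*s^1*(3-2*s)^4
     + (53651/6250)*r^0*(3-2*r)^7*s^2*(3-2*s)^3 + (1267123/40000)*r^0*(3-2*r)^7*s^3*(3-2*s)^2
     + (408707/8000)*r^0*(3-2*r)^7*s^4*(3-2*s)^1 + (73541/3200)*r^0*(3-2*r)^7*s^5*(3-2*s)^0
     + (619199/200000)*r^1*(3-2*r)^6*s^0*(3-2*s)^5 + (287233/4000)*r^1*(3-2*r)^6*s^1*(3-2*s)^4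
     + (626985169/1000000)*r^1*(3-2*r)^6*s^2*(3-2*s)^3 + (500706757/200000)*r^1*(3-2*r)^6*s^3*(3-2*s)^2
     + (10601477/2500)*r^1*(3-2*r)^6*s^4*(3-2*s)^1 + (14260669/8000)*r^1*(3-2*r)^6*s^5*(3-2*s)^0
     + (8399307/200000)*r^2*(3-2*r)^5*s^0*(3-2*s)^5 + (84890829/80000)*r^2*(3-2*r)^5*s^1*(3-2*s)^4
     + (9992692437/1000000)*r^2*(3-2*r)^5*s^2*(3-2*s)^3 + (85464774231/2000000)*r^2*(3-2*r)^5*s^3*(3-2*s)^2
     + (15440089551/200000)*r^2*(3-2*r)^5*s^4*(3-2*s)^1 + (1392347433/40000)*r^2*(3-2*r)^5*s^5*(3-2*s)^0
     + (49453621/200000)*r^3*(3-2*r)^4*s^0*(3-2*s)^5 + (1362591097/200000)*r^3*(3-2*r)^4*s^1*(3-2*s)^4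
     + (4311446501/62500)*r^3*(3-2*r)^4*s^2*(3-2*s)^3 + (313533773623/1000000)*r^3*(3-2*r)^4*s^3*(3-2*s)^2
     + (119151620741/200000)*r^3*(3-2*r)^4*s^4*(3-2*s)^1 + (5606991899/20000)*r^3*(3-2*r)^4*s^5*(3-2*s)^0
     + (4777129/6250)*r^4*(3-2*r)^3*s^0*(3-2*s)^5 + (2284258309/100000)*r^4*(3-2*r)^3*s^1*(3-2*s)^4
     + (246795721813/1000000)*r^4*(3-2*r)^3*s^2*(3-2*s)^3 + (2352759132397/2000000)*r^4*(3-2*r)^3*s^3*(3-2*s)^2
     + (229966223411/100000)*r^4*(3-2*r)^3*s^4*(3-2*s)^1 + (87850608877/80000)*r^4*(3-2*r)^3*s^5*(3-2*s)^0
     + (32586393/25000)*r^5*(3-2*r)^2*s^0*(3-2*s)^5 + (10482343419/250000)*r^5*(3-2*r)^2*s^1*(3-2*s)^4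
     + (477736924269/1000000)*r^5*(3-2*r)^2*s^2*(3-2*s)^3 + (2333456520639/1000000)*r^5*(3-2*r)^2*s^3*(3-2*s)^2
     + (900776866143/200000)*r^5*(3-2*r)^2*s^4*(3-2*s)^1 + (85071179949/40000)*r^5*(3-2*r)^2*s^5*(3-2*s)^0
     + (2913953/2500)*r^6*(3-2*r)^1*s^0*(3-2*s)^5 + (500401537/12500)*r^6*(3-2*r)^1*s^1*(3-2*s)^4
     + (11849492441/25000)*r^6*(3-2*r)^1*s^2*(3-2*s)^3 + (227882066299/100000)*r^6*(3-2*r)^1*s^3*(3-2*s)^2
     + (19647921347/5000)*r^6*(3-2*r)^1*s^4*(3-2*s)^1 + (6978455509/4000)*r^6*(3-2*r)^1*s^5*(3-2*s)^0
     + (214109/500)*r^7*(3-2*r)^0*s^0*(3-2*s)^5 + (9737119/625)*r^7*(3-2*r)^0*s^1*(3-2*s)^4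
     + (1883850481/10000)*r^7*(3-2*r)^0*s^2*(3-2*s)^3 + (8295764141/10000)*r^7*(3-2*r)^0*s^3*(3-2*s)^2
     + (1704707617/2000)*r^7*(3-2*r)^0*s^4*(3-2*s)^1 + (67312031/400)*r^7*(3-2*r)^0*s^5*(3-2*s)^0"
  unfolding minor3_def form_xx_def form_xy_def d1_num_def d0_num_def d2_num_def bdf3_den_def
  by algebra

lemma minors_pos:
  fixes r s :: real
  assumes "0 < r" "r < 3/2" "0 < s" "s < 3/2"
  shows "0 < form_xx r s" "0 < minor2 r s" "0 < minor3 r s"
proof -
  have "0 < 3 - 2 * r" "0 < 3 - 2 * s"
    using assms by auto
  then have "0 < 3^4 * form_xx r s" "0 < 3^11 * minor2 r s" "0 < 3^12 * minor3 r s"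
    unfolding form_xx_bernstein minor2_bernstein minor3_bernstein using assms
    by (intro add_pos_pos mult_pos_pos zero_less_power; simp)+
  then show "0 < form_xx r s" "0 < minor2 r s" "0 < minor3 r s"
    by (simp_all add: zero_less_mult_iff)
qed

lemma bdf3_step_energy:
  fixes t0 t1 t2 x y z :: real
  assumes "0 < t0" "0 < t1" "0 < t2" "t0 / t1 < 3/2" "t1 / t2 < 3/2"
  shows "bdf3_energy t0 t1 x y - bdf3_energy t1 t2 y z + 1/100 * t0 * x^2
           \<le> t0 * x * (d0 (t0/t1) (t1/t2) * x + d1 (t0/t1) (t1/t2) * y + d2 (t0/t1) (t1/t2) * z)"
proof -
  define r s where "r = t0 / t1" and "s = t1 / t2"
  have r: "0 < r" "r < 3/2" and s: "0 < s" "s < 3/2"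
    using assms unfolding r_def s_def by auto
  have minors: "0 < form_xx r s" "0 < minor2 r s" "0 < minor3 r s"
    using minors_pos r s by auto
  have t: "t1 = s * t2" "t0 = r * s * t2"
    unfolding r_def s_def using assms by simp_all
  define A where "A = r * s * form_xx r s"
  define B where "B = r * s * form_xy r s"
  define C where "C = r * s * d2_num r s"
  define D where "D = 23/40 * s * bdf3_den r s"
  define E where "E = - 59/100 * s * bdf3_den r s"
  define F where "F = 7/20 * bdf3_den r s"
  have identity: "bdf3_den r s * (t0 * x * (d0 r s * x + d1 r s * y + d2 r s * z)
          - (bdf3_energy t0 t1 x y - bdf3_energy t1 t2 y z + 1/100 * t0 * x^2))
      = t2 * (A * x^2 + B * x * y + C * x * z + D * y^2 + E * y * z + F * z^2)"
    unfolding A_def B_def C_def D_def E_def F_def form_xx_def form_xy_def bdf3_energy_def t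
      d_times_bdf3_den[OF r(1) s(1), symmetric]
    by algebra
  have "0 \<le> A * x^2 + B * x * y + C * x * z + D * y^2 + E * y * z + F * z^2"
  proof (rule ternary_form_nonneg)
    show "0 < A"
      unfolding A_def using minors r s by simp
    have "4 * A * D - B^2 = r * s^2 * minor2 r s"
      unfolding A_def B_def D_def minor2_def by algebra
    then show "0 < 4 * A * D - B^2"
      using minors r s by simp
    have "4 * A * D * F + B * C * E - A * E^2 - B^2 * F - C^2 * D
        = r * s^2 * bdf3_den r s * minor3 r s"
      unfolding A_def B_def C_def D_def E_def F_def minor3_def by algebra
    then show "0 \<le> 4 * A * D * F + B * C * E - A * E^2 - B^2 * F - C^2 * D"
      using minors r s bdf3_den_pos[OF r(1) s(1)] by (simp add: less_imp_le)
  qed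
  then have "0 \<le> bdf3_den r s * (t0 * x * (d0 r s * x + d1 r s * y + d2 r s * z)
          - (bdf3_energy t0 t1 x y - bdf3_energy t1 t2 y z + 1/100 * t0 * x^2))"
    unfolding identity using \<open>0 < t2\<close> by simp
  then show ?thesis
    using bdf3_den_pos[OF r(1) s(1)] unfolding r_def s_def by (simp add: zero_le_mult_iff)
qed

lemma doc_form_eq_bdf3_solve:
  fixes tau xi :: "nat \<Rightarrow> real"
  assumes d0: "\<And>k. 3 \<le> k \<Longrightarrow> bdf3 tau k 0 \<noteq> 0"
  defines "w \<equiv> bdf3_solve tau xi"
  shows "(\<Sum>k=3..n. xi k * (\<Sum>j=3..k. tau k * doc tau k (k - j) * xi j))
       = (\<Sum>k=3..n. tau k * w k * (bdf3 tau k 0 * w k + bdf3 tau k 1 * w (k - 1) + bdf3 tau k 2 * w (k - 2)))"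
proof (rule sum.cong)
  fix k assume "k \<in> {3..n}"
  then have "3 \<le> k" by simp
  have "(\<Sum>j=3..k. tau k * doc tau k (k - j) * xi j) = tau k * w k"
    using doc_conv_eq_bdf3_solve[OF d0 \<open>3 \<le> k\<close>] unfolding w_def
    by (simp add: mult.assoc flip: sum_distrib_left)
  then show "xi k * (\<Sum>j=3..k. tau k * doc tau k (k - j) * xi j)
      = tau k * w k * (bdf3 tau k 0 * w k + bdf3 tau k 1 * w (k - 1) + bdf3 tau k 2 * w (k - 2))"
    using bdf3_solve_recurrence[OF \<open>3 \<le> k\<close> d0[OF \<open>3 \<le> k\<close>], of xi] unfolding w_def
    by (simp add: algebra_simps)
qed simp

lemma bdf3_solve_nonzero:
  assumes d0: "\<And>k. 3 \<le> k \<Longrightarrow> bdf3 tau k 0 \<noteq> 0" and "\<exists>k\<in>{3..n}. xi k \<noteq> 0"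
  shows "\<exists>k\<in>{3..n}. bdf3_solve tau xi k \<noteq> 0"
proof (rule ccontr)
  assume "\<not> ?thesis"
  then have w: "bdf3_solve tau xi k = 0" if "k \<le> n" for k
    using that bdf3_solve_less_3 by (cases "k < 3") auto
  have "xi k = 0" if "k \<in> {3..n}" for k
  proof -
    have "k \<le> n" "k - 1 \<le> n" "k - 2 \<le> n"
      using that by auto
    then show ?thesis
      using bdf3_solve_recurrence[of k tau xi] d0[of k] w that by simp
  qed
  then show False
    using assms(2) by blast
qed

lemma sum_diff_pred_telescope:
  fixes f :: "nat \<Rightarrow> 'a::ab_group_add"
  assumes "m \<le> n"
  shows "(\<Sum>k=Suc m..n. f k - f (k - 1)) = f n - f m"
  using assms by (induction n) (auto simp: le_Suc_eq)

lemma d0_pos: "0 < x \<Longrightarrow> 0 < y \<Longrightarrow> 0 < d0 x y"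
  unfolding d0_def by (intro add_pos_nonneg divide_pos_pos) (auto simp: add_pos_pos)

lemma bdf3_0_pos:
  assumes tau_pos: "\<And>k. 1 \<le> k \<Longrightarrow> 0 < tau k" and "3 \<le> k"
  shows "0 < bdf3 tau k 0"
proof -
  have "0 < ratio tau k" "0 < ratio tau (k - 1)"
    using tau_pos[of k] tau_pos[of "k - 1"] tau_pos[of "k - 2"] \<open>3 \<le> k\<close>
    by (simp_all add: ratio_def numeral_2_eq_2)
  then show ?thesis
    by (simp add: bdf3_def d0_pos)
qed

lemma bdf3_step_energy_seq:
  fixes tau w :: "nat \<Rightarrow> real"
  assumes tau_pos: "\<And>k. 1 \<le> k \<Longrightarrow> 0 < tau k"
    and ratio_less: "\<And>k. 2 \<le> k \<Longrightarrow> ratio tau k < 3/2" and "3 \<le> k"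
  shows "bdf3_energy (tau k) (tau (k - 1)) (w k) (w (k - 1))
           - bdf3_energy (tau (k - 1)) (tau (k - 2)) (w (k - 1)) (w (k - 2)) + 1/100 * tau k * w k ^ 2
         \<le> tau k * w k * (bdf3 tau k 0 * w k + bdf3 tau k 1 * w (k - 1) + bdf3 tau k 2 * w (k - 2))"
proof -
  have "0 < tau k" "0 < tau (k - 1)" "0 < tau (k - 2)"
    "tau k / tau (k - 1) < 3/2" "tau (k - 1) / tau (k - 2) < 3/2"
    using tau_pos[of k] tau_pos[of "k - 1"] tau_pos[of "k - 2"] ratio_less[of k]
      ratio_less[of "k - 1"] \<open>3 \<le> k\<close>
    by (simp_all add: ratio_def numeral_2_eq_2)
  from bdf3_step_energy[OF this, of "w k" "w (k - 1)" "w (k - 2)"] show ?thesis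
    by (simp add: bdf3_def ratio_def mult.assoc numeral_2_eq_2)
qed

theorem doc_quadratic_form_pos:
  fixes tau xi :: "nat \<Rightarrow> real" and n :: nat
  assumes tau_pos: "\<And>k. 1 \<le> k \<Longrightarrow> 0 < tau k"
    and ratio_less: "\<And>k. 2 \<le> k \<Longrightarrow> ratio tau k < 3/2"
    and "3 \<le> n" and nonzero: "\<exists>k\<in>{3..n}. xi k \<noteq> 0"
  shows "0 < (\<Sum>k=3..n. xi k * (\<Sum>j=3..k. tau k * doc tau k (k - j) * xi j))"
proof -
  let ?w = "bdf3_solve tau xi"
  let ?E = "\<lambda>k. bdf3_energy (tau k) (tau (k - 1)) (?w k) (?w (k - 1))"
  have d0: "bdf3 tau k 0 \<noteq> 0" if "3 \<le> k" for k
    using bdf3_0_pos[of tau, OF tau_pos that] by simp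
  have "(\<Sum>k=3..n. ?E k - ?E (k - 1)) + 1/100 * (\<Sum>k=3..n. tau k * ?w k ^ 2)
      = (\<Sum>k=3..n. ?E k - ?E (k - 1) + 1/100 * tau k * ?w k ^ 2)"
    by (simp add: sum.distrib sum_distrib_left mult.assoc)
  also have "\<dots> \<le> (\<Sum>k=3..n. tau k * ?w k
      * (bdf3 tau k 0 * ?w k + bdf3 tau k 1 * ?w (k - 1) + bdf3 tau k 2 * ?w (k - 2)))"
    using bdf3_step_energy_seq[of tau, OF tau_pos ratio_less] by (intro sum_mono) (simp add: numeral_2_eq_2)
  also have "\<dots> = (\<Sum>k=3..n. xi k * (\<Sum>j=3..k. tau k * doc tau k (k - j) * xi j))"
    by (rule doc_form_eq_bdf3_solve[OF d0, symmetric])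
  finally have "(\<Sum>k=3..n. ?E k - ?E (k - 1)) + 1/100 * (\<Sum>k=3..n. tau k * ?w k ^ 2)
      \<le> (\<Sum>k=3..n. xi k * (\<Sum>j=3..k. tau k * doc tau k (k - j) * xi j))" .
  moreover have "(\<Sum>k=3..n. ?E k - ?E (k - 1)) = ?E n"
    using sum_diff_pred_telescope[of 2 n ?E] \<open>3 \<le> n\<close> by (simp add: bdf3_energy_def bdf3_solve_less_3)
  moreover have "0 \<le> ?E n"
    using tau_pos[of n] tau_pos[of "n - 1"] ratio_less[of n] \<open>3 \<le> n\<close>
    by (intro bdf3_energy_nonneg) (simp_all add: ratio_def pos_divide_less_eq)
  moreover have "0 < (\<Sum>k=3..n. tau k * ?w k ^ 2)"
  proof -
    obtain k where k: "k \<in> {3..n}" "?w k \<noteq> 0"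
      using bdf3_solve_nonzero[OF d0 nonzero] by blast
    have "0 \<le> tau i * ?w i ^ 2" if "i \<in> {3..n}" for i
      using tau_pos[of i] that by simp
    then show ?thesis
      using k tau_pos[of k] by (intro sum_pos2[OF _ k(1)]) auto
  qed
  ultimately show ?thesis
    by linarith
qed

theorem lemma4p1:
  fixes tau :: "nat \<Rightarrow> real" and xi :: "nat \<Rightarrow> real" and n :: nat
  assumes tau_pos: "\<And>k. k \<ge> 1 \<Longrightarrow> tau k > 0"
    and ratio_bound: "\<And>k. k \<ge> 2 \<Longrightarrow> 0 < ratio tau k \<and> ratio tau k < Re_root"
    and n3: "n \<ge> 3"
    and nonzero: "\<exists>k\<in>{3..n}. xi k \<noteq> 0"
  shows "2 * (\<Sum>k=3..n. xi k * (\<Sum>j=3..k. tau k * doc tau k (k - j) * xi j)) > 0"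
proof -
  have "ratio tau k < 3/2" if "2 \<le> k" for k
    using ratio_bound[OF that] Re_root_less by linarith
  then show ?thesis
    using doc_quadratic_form_pos[OF tau_pos _ n3 nonzero] by simp
qed

end
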